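(* Let $\xi\in\mathbb R$ and let $(c_k)_{k\in\mathbb Z}$ be complex numbers with $|c_k|\le Ce^{-\delta|k|}$ for all $k$, for some $C,\delta>0$. Then for every $0<\varepsilon<\delta/2$ the series $\sum_{k\in\mathbb Z}c_k\rho_{\xi,k}$ converges in $H(S_{\delta/2-\varepsilon})$, i.e. uniformly on each set $\{z\in S_{\delta/2-\varepsilon}:|z|\le n\}$, $n\ge1$.
   Context: $\rho_1(z)=z\int_0^z e^{-s^2}ds$ is entire and even, so there is an entire $\rho_2$ with $\rho_1(z)=\rho_2(z^2)$. For $\xi\in\mathbb R$, $k\in\mathbb Z$, $\rho_{\xi,k}(z)=\frac2\pi\big(2e^{(\xi+ik)z}\rho_2((\xi+ik)z)+1\big)$. $S_\eta=\{z\in\mathbb C:|\operatorname{Im}z|\le\eta\}$; $H(\Omega)$ denotes the Fréchet space of holomorphic functions on $\Omega$ with seminorms $\|f\|_n=\sup\{|f(z)|:z\in\Omega,|z|\le n\}$. *)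

theory Defs
  imports "HOL-Complex_Analysis.Complex_Analysis"
begin

definition rho1 :: "complex \<Rightarrow> complex" where
  "rho1 z = z * contour_integral (linepath 0 z) (\<lambda>s. exp (- (s^2)))"

text \<open>rho1 is even, so rho1 (csqrt w) does not depend on the choice of square root;
  this is the entire function rho2 with rho1 z = rho2 (z^2).\<close>
definition rho2 :: "complex \<Rightarrow> complex" where
  "rho2 w = rho1 (csqrt w)"

definition rho_xk :: "real \<Rightarrow> int \<Rightarrow> complex \<Rightarrow> complex" where
  "rho_xk \<xi> k z = (2 / of_real pi) *
     (2 * exp ((of_real \<xi> + \<i> * of_int k) * z) * rho2 ((of_real \<xi> + \<i> * of_int k) * z) + 1)"

definition strip :: "real \<Rightarrow> complex set" where
  "strip \<eta> = {z. \<bar>Im z\<bar> \<le> \<eta>}"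

end

theory Submission
  imports Defs
begin

text \<open>Along the segment from 0 to w one has |exp (-s^2)| \<le> exp |Re (w^2)|, so
  |rho2 u| \<le> |u| exp |Re u| and hence |rho_xk \<xi> k z| grows at most like
  (1 + |k|) exp (2 |Re ((\<xi> + i k) z)|).  On the strip |Im z| \<le> \<delta>/2 - \<epsilon> this is
  (1 + |k|) exp ((\<delta> - 2\<epsilon>) |k|) up to a factor depending only on |z|, and the decay
  exp (-\<delta> |k|) of the coefficients leaves a summable majorant of order exp (-\<epsilon> |k|):
  the Weierstrass M-test applies.\<close>

lemma norm_contour_integral_exp_neg_square_le:
  "norm (contour_integral (linepath 0 w) (\<lambda>s. exp (- (s^2)))) \<le> exp \<bar>Re (w^2)\<bar> * norm w"
proof -
  have integral: "((\<lambda>s. exp (- (s^2))) has_contour_integral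
      contour_integral (linepath 0 w) (\<lambda>s. exp (- (s^2)))) (linepath 0 w)"
    by (intro has_contour_integral_integral contour_integrable_continuous_linepath continuous_intros)
  have "norm (exp (- (s^2))) \<le> exp \<bar>Re (w^2)\<bar>" if "s \<in> closed_segment 0 w" for s
  proof -
    from that obtain u :: real where u: "0 \<le> u" "u \<le> 1" "s = u *\<^sub>R w"
      unfolding in_segment by auto
    have "Re (- (s^2)) = - (u^2 * Re (w^2))"
      using u(3) by (simp add: scaleR_conv_of_real power_mult_distrib)
    also have "\<dots> \<le> \<bar>Re (w^2)\<bar>"
    proof -
      have "\<bar>u^2 * Re (w^2)\<bar> \<le> \<bar>Re (w^2)\<bar>"
        using u by (simp add: abs_mult power_le_one mult_left_le_one_le)
      thus ?thesis by linarith
    qed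
    finally show ?thesis by simp
  qed
  from has_contour_integral_bound_linepath[OF integral _ this] show ?thesis by simp
qed

lemma norm_rho2_le: "norm (rho2 u) \<le> norm u * exp \<bar>Re u\<bar>"
proof -
  have "norm (rho2 u) = norm (csqrt u) *
      norm (contour_integral (linepath 0 (csqrt u)) (\<lambda>s. exp (- (s^2))))"
    by (simp add: rho2_def rho1_def norm_mult)
  also have "\<dots> \<le> norm (csqrt u) * (exp \<bar>Re ((csqrt u)^2)\<bar> * norm (csqrt u))"
    by (intro mult_left_mono norm_contour_integral_exp_neg_square_le) auto
  also have "\<dots> = norm u * exp \<bar>Re u\<bar>"
    by (metis mult.commute mult.left_commute norm_mult power2_csqrt power2_eq_square)
  finally show ?thesis .
qed

lemma norm_rho_xk_le:
  fixes \<xi> :: real and k :: int and z :: complex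
  defines "u \<equiv> (of_real \<xi> + \<i> * of_int k) * z"
  shows "norm (rho_xk \<xi> k z) \<le> (2 / pi) * (2 * norm u * exp (2 * \<bar>Re u\<bar>) + 1)"
proof -
  have "norm (2 * exp u * rho2 u + 1) \<le> 2 * exp (Re u) * norm (rho2 u) + 1"
    using norm_triangle_ineq[of "2 * exp u * rho2 u" 1] by (simp add: norm_mult)
  also have "\<dots> \<le> 2 * exp \<bar>Re u\<bar> * (norm u * exp \<bar>Re u\<bar>) + 1"
    by (intro add_right_mono mult_mono norm_rho2_le) auto
  also have "\<dots> = 2 * norm u * exp (2 * \<bar>Re u\<bar>) + 1"
    by (simp add: exp_double power2_eq_square)
  finally have "norm (2 * exp u * rho2 u + 1) \<le> 2 * norm u * exp (2 * \<bar>Re u\<bar>) + 1" .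
  moreover have "rho_xk \<xi> k z = (2 / of_real pi) * (2 * exp u * rho2 u + 1)"
    unfolding rho_xk_def u_def ..
  hence "norm (rho_xk \<xi> k z) = (2 / pi) * norm (2 * exp u * rho2 u + 1)"
    by (simp only: norm_mult norm_divide norm_numeral norm_of_real abs_of_pos pi_gt_zero)
  ultimately show ?thesis
    by (metis mult_left_mono pi_gt_zero less_imp_le divide_nonneg_pos zero_le_numeral)
qed

lemma norm_rho_xk_le_on_strip:
  assumes "\<bar>Im z\<bar> \<le> \<eta>" and "norm z \<le> r"
  shows "norm (rho_xk \<xi> k z) \<le>
    (2 / pi) * (2 * (\<bar>\<xi>\<bar> + 1) * r * exp (2 * \<bar>\<xi>\<bar> * r) + 1)
      * ((1 + \<bar>real_of_int k\<bar>) * exp (2 * \<eta> * \<bar>real_of_int k\<bar>))"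
proof -
  define t where "t = \<bar>real_of_int k\<bar>"
  define u where "u = (of_real \<xi> + \<i> * of_int k) * z"
  define E where "E = exp (2 * \<bar>\<xi>\<bar> * r)"
  have t: "t \<ge> 0" by (simp add: t_def)
  have r: "r \<ge> 0" and \<eta>: "\<eta> \<ge> 0"
    using assms norm_ge_zero[of z] abs_ge_zero[of "Im z"] by linarith+
  have "\<bar>Re u\<bar> = \<bar>\<xi> * Re z - of_int k * Im z\<bar>" by (simp add: u_def)
  also have "\<dots> \<le> \<bar>\<xi>\<bar> * \<bar>Re z\<bar> + t * \<bar>Im z\<bar>"
    using abs_triangle_ineq4[of "\<xi> * Re z" "of_int k * Im z"] by (simp add: t_def abs_mult)
  also have "\<dots> \<le> \<bar>\<xi>\<bar> * r + t * \<eta>"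
    using abs_Re_le_cmod[of z] assms t by (intro add_mono mult_left_mono) auto
  finally have "exp (2 * \<bar>Re u\<bar>) \<le> E * exp (2 * \<eta> * t)"
    by (simp add: E_def exp_add[symmetric] algebra_simps)
  moreover have "norm u \<le> (\<bar>\<xi>\<bar> + 1) * (1 + t) * r"
  proof -
    have "norm (of_real \<xi> + \<i> * of_int k) \<le> \<bar>\<xi>\<bar> + t"
      using norm_triangle_ineq[of "of_real \<xi>" "\<i> * of_int k"] by (simp add: t_def norm_mult)
    also have "\<dots> \<le> (\<bar>\<xi>\<bar> + 1) * (1 + t)" using t by (simp add: algebra_simps)
    finally show ?thesis
      unfolding u_def norm_mult using assms(2) t by (intro mult_mono) auto
  qed
  moreover have "1 * 1 \<le> (1 + t) * exp (2 * \<eta> * t)"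
    using t \<eta> by (intro mult_mono) auto
  ultimately have "2 * norm u * exp (2 * \<bar>Re u\<bar>) + 1 \<le>
      2 * ((\<bar>\<xi>\<bar> + 1) * (1 + t) * r) * (E * exp (2 * \<eta> * t)) + (1 + t) * exp (2 * \<eta> * t)"
    using t r by (intro add_mono mult_mono) (auto simp: E_def)
  also have "\<dots> = (2 * (\<bar>\<xi>\<bar> + 1) * r * E + 1) * ((1 + t) * exp (2 * \<eta> * t))"
    by (simp add: algebra_simps)
  finally have "(2 / pi) * (2 * norm u * exp (2 * \<bar>Re u\<bar>) + 1) \<le>
      (2 / pi) * ((2 * (\<bar>\<xi>\<bar> + 1) * r * E + 1) * ((1 + t) * exp (2 * \<eta> * t)))"
    by (intro mult_left_mono) auto
  from order_trans[OF norm_rho_xk_le this[unfolded u_def]] show ?thesis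
    by (simp only: t_def E_def mult.assoc)
qed

lemma one_plus_mult_exp_neg_le:
  fixes t \<epsilon> :: real
  assumes "t \<ge> 0" and "\<epsilon> > 0"
  shows "(1 + t) * exp (- (2 * \<epsilon>) * t) \<le> (1 + 1 / \<epsilon>) * exp (- \<epsilon> * t)"
proof -
  have "1 + t \<le> (1 + 1 / \<epsilon>) * (1 + \<epsilon> * t)"
    using assms by (simp add: field_simps)
  also have "\<dots> \<le> (1 + 1 / \<epsilon>) * exp (\<epsilon> * t)"
    using assms by (intro mult_left_mono exp_ge_add_one_self) auto
  finally have "(1 + t) * exp (- (2 * \<epsilon>) * t) \<le> (1 + 1 / \<epsilon>) * (exp (\<epsilon> * t) * exp (- (2 * \<epsilon>) * t))"
    by (simp add: mult_right_mono)
  also have "exp (\<epsilon> * t) * exp (- (2 * \<epsilon>) * t) = exp (- \<epsilon> * t)"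
    by (simp add: exp_add[symmetric])
  finally show ?thesis .
qed

lemma summable_on_int_nat_abs:
  fixes f :: "nat \<Rightarrow> real"
  assumes "summable f" and "\<And>n. f n \<ge> 0"
  shows "(\<lambda>k::int. f (nat \<bar>k\<bar>)) summable_on UNIV"
proof -
  have f: "f summable_on UNIV"
    using assms by (simp add: summable_on_UNIV_nonneg_real_iff)
  have "k \<in> range int \<union> range (\<lambda>n. - int n)" for k :: int
    using image_eqI[of k int "nat k"] image_eqI[of k "\<lambda>n. - int n" "nat (- k)"] by fastforce
  hence "(UNIV :: int set) = range int \<union> range (\<lambda>n. - int n)" by blast
  moreover have "(\<lambda>k::int. f (nat \<bar>k\<bar>)) summable_on range int"
    and "(\<lambda>k::int. f (nat \<bar>k\<bar>)) summable_on range (\<lambda>n. - int n)"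
    by (subst summable_on_reindex; use f in \<open>simp add: o_def inj_on_def\<close>)+
  ultimately show ?thesis by (metis summable_on_union)
qed

lemma exp_neg_abs_int_summable_on:
  fixes \<epsilon> :: real
  assumes "\<epsilon> > 0"
  shows "(\<lambda>k::int. exp (- \<epsilon> * \<bar>real_of_int k\<bar>)) summable_on UNIV"
proof -
  have "summable (\<lambda>n. exp (- \<epsilon>) ^ n)"
    using assms by (intro summable_geometric) auto
  from summable_on_int_nat_abs[OF this] show ?thesis
    by (simp add: exp_of_nat_mult[symmetric] mult.commute)
qed

lemma norm_coeff_mult_rho_xk_le:
  fixes \<xi> C \<delta> \<epsilon> r :: real and a :: complex and k :: int
  defines "t \<equiv> \<bar>real_of_int k\<bar>"
  assumes "norm a \<le> C * exp (- \<delta> * t)" and "C > 0" and "\<epsilon> > 0"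
    and "\<bar>Im z\<bar> \<le> \<delta> / 2 - \<epsilon>" and "norm z \<le> r"
  shows "norm (a * rho_xk \<xi> k z) \<le>
    C * ((2 / pi) * (2 * (\<bar>\<xi>\<bar> + 1) * r * exp (2 * \<bar>\<xi>\<bar> * r) + 1)) * (1 + 1 / \<epsilon>)
      * exp (- \<epsilon> * t)"
proof -
  define A where "A = (2 / pi) * (2 * (\<bar>\<xi>\<bar> + 1) * r * exp (2 * \<bar>\<xi>\<bar> * r) + 1)"
  have "r \<ge> 0" using assms norm_ge_zero[of z] by linarith
  hence A: "A \<ge> 0" by (simp add: A_def)
  have t: "t \<ge> 0" by (simp add: t_def)
  have "norm (a * rho_xk \<xi> k z) \<le> C * exp (- \<delta> * t) * (A * ((1 + t) * exp (2 * (\<delta> / 2 - \<epsilon>) * t)))"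
    unfolding norm_mult A_def t_def
    using assms norm_rho_xk_le_on_strip[of z "\<delta> / 2 - \<epsilon>" r \<xi> k]
    by (intro mult_mono) auto
  also have "\<dots> = C * A * ((1 + t) * exp (- (2 * \<epsilon>) * t))"
    by (simp add: exp_add[symmetric] algebra_simps)
  also have "\<dots> \<le> C * A * ((1 + 1 / \<epsilon>) * exp (- \<epsilon> * t))"
    using assms A t by (intro mult_left_mono one_plus_mult_exp_neg_le) auto
  finally show ?thesis by (simp add: A_def mult_ac)
qed

theorem lemma5:
  fixes \<xi> C \<delta> \<epsilon> :: real and c :: "int \<Rightarrow> complex"
  assumes "C > 0" and "\<delta> > 0"
    and "\<And>k. norm (c k) \<le> C * exp (- \<delta> * \<bar>real_of_int k\<bar>)"
    and "0 < \<epsilon>" and "\<epsilon> < \<delta> / 2"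
  shows "\<exists>f. \<forall>n::nat. n \<ge> 1 \<longrightarrow>
           uniform_limit {z \<in> strip (\<delta> / 2 - \<epsilon>). norm z \<le> real n}
             (\<lambda>I z. \<Sum>k\<in>I. c k * rho_xk \<xi> k z) f (finite_subsets_at_top UNIV)"
proof (intro exI allI impI)
  fix n :: nat
  define K where "K = C * ((2 / pi) * (2 * (\<bar>\<xi>\<bar> + 1) * real n * exp (2 * \<bar>\<xi>\<bar> * real n) + 1))
    * (1 + 1 / \<epsilon>)"
  show "uniform_limit {z \<in> strip (\<delta> / 2 - \<epsilon>). norm z \<le> real n}
      (\<lambda>I z. \<Sum>k\<in>I. c k * rho_xk \<xi> k z) (\<lambda>z. \<Sum>\<^sub>\<infinity>k. c k * rho_xk \<xi> k z)
      (finite_subsets_at_top UNIV)"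
  proof (rule Weierstrass_m_test_general)
    show "norm (c k * rho_xk \<xi> k z) \<le> K * exp (- \<epsilon> * \<bar>real_of_int k\<bar>)"
      if "z \<in> {z \<in> strip (\<delta> / 2 - \<epsilon>). norm z \<le> real n}" for k z
      using that assms norm_coeff_mult_rho_xk_le[of "c k" C \<delta> k \<epsilon> z "real n" \<xi>]
      by (simp add: strip_def K_def)
    show "(\<lambda>k. K * exp (- \<epsilon> * \<bar>real_of_int k\<bar>)) summable_on UNIV"
      using assms by (intro summable_on_cmult_right exp_neg_abs_int_summable_on)
  qed
qed

end
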